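(* Let $L\in(0,\infty]$ and let $\gamma\in C^\infty([0,L),\mathbb{R}^2)$ be an arclength-parameterized plane curve with $\gamma(s)\neq0$ for all $s\in(0,L)$, with signed curvature $\kappa$ and polar tangential angle function $\omega:(0,L)\to\mathbb{R}$. Assume that $(\kappa^2)_s(s)>0$ for every $s\in(0,L)$, and that the origin does not belong to the initial osculating disk $\widetilde D(0)$. Then $\kappa(s)\omega_s(s)>0$ for every $s\in(0,L)$; in particular $\omega$ is strictly monotone on $(0,L)$.
   Context: $T=\gamma_s$, $N=R_{\pi/2}T$ with $R_\theta$ counterclockwise rotation by $\theta$, and $\gamma_{ss}=\kappa N$. With $X:=\gamma/|\gamma|$, a polar tangential angle function is a smooth $\omega:(0,L)\to\mathbb{R}$ with $R_{\omega}X=T$ on $(0,L)$. Under the assumption $(\kappa^2)_s>0$ on $(0,L)$ one has $\kappa(s)\neq0$ for $s\in(0,L)$; for such $s$, $D(s)$ denotes the open disk of radius $1/|\kappa(s)|$ centered at $\gamma(s)+\kappa(s)^{-1}N(s)$ (the disk enclosed by the osculating circle). These disks are nested (decreasing as $s$ increases), and the initial osculating disk is the open set $\widetilde D(0):=\lim_{s\downarrow0}D(s)=\bigcup_{s\in(0,L)}D(s)$. *)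

theory Defs
  imports "HOL-Analysis.Analysis"
begin

text \<open>The plane R^2 is identified with the complex numbers; the counterclockwise
rotation R_theta is multiplication by cis theta, so R_(pi/2) is multiplication by i.\<close>

definition smooth_on_set :: "real set \<Rightarrow> (real \<Rightarrow> 'a::real_normed_vector) \<Rightarrow> bool" where
  "smooth_on_set S f \<longleftrightarrow>
     (\<exists>F :: nat \<Rightarrow> real \<Rightarrow> 'a. F 0 = f \<and>
        (\<forall>k. \<forall>s\<in>S. (F k has_vector_derivative F (Suc k) s) (at s within S)))"

definition param_int :: "ereal \<Rightarrow> real set" where
  "param_int L = {s. 0 \<le> s \<and> ereal s < L}"

definition open_param_int :: "ereal \<Rightarrow> real set" where
  "open_param_int L = {s. 0 < s \<and> ereal s < L}"

definition osc_disk :: "(real \<Rightarrow> complex) \<Rightarrow> (real \<Rightarrow> complex) \<Rightarrow> (real \<Rightarrow> real) \<Rightarrow> real \<Rightarrow> complex set" where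
  "osc_disk \<gamma> T \<kappa> s = ball (\<gamma> s + of_real (1 / \<kappa> s) * (\<i> * T s)) (1 / \<bar>\<kappa> s\<bar>)"

definition init_osc_disk :: "ereal \<Rightarrow> (real \<Rightarrow> complex) \<Rightarrow> (real \<Rightarrow> complex) \<Rightarrow> (real \<Rightarrow> real) \<Rightarrow> complex set" where
  "init_osc_disk L \<gamma> T \<kappa> = (\<Union>s\<in>open_param_int L. osc_disk \<gamma> T \<kappa> s)"

end

theory Submission
  imports Defs
begin

(*
  Differentiating the polar relation T = cis \<omega> \<gamma>/|\<gamma>| with T' = \<i> \<kappa> T gives
  \<omega>' |\<gamma>| = \<kappa> |\<gamma>| - sin \<omega>.  The origin lying outside the osculating disk D(s) means
  |\<gamma> + \<i> T/\<kappa>| \<ge> 1/|\<kappa>|, i.e. 2 \<kappa> sin \<omega> \<le> |\<gamma>| \<kappa>\<^sup>2.  Hence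
  \<kappa> \<omega>' |\<gamma>| = \<kappa>\<^sup>2 |\<gamma>| - \<kappa> sin \<omega> \<ge> \<kappa>\<^sup>2 |\<gamma>| / 2 > 0, where \<kappa> \<noteq> 0 because (\<kappa>\<^sup>2)' > 0.
  As \<omega>' is continuous and nonzero on the interval (0,L), it has constant sign there.
*)

lemma has_vector_derivative_cis:
  assumes "(f has_real_derivative w) (at x)"
  shows "((\<lambda>t. cis (f t)) has_vector_derivative of_real w * (\<i> * cis (f x))) (at x)"
  using has_derivative_cis[OF assms[unfolded has_field_derivative_def]]
  by (simp add: has_vector_derivative_def scaleR_conv_of_real algebra_simps)

lemma open_open_param_int: "open (open_param_int L)"
proof -
  have "open_param_int L = {0<..} \<inter> ereal -` {..<L}"
    by (auto simp: open_param_int_def)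
  moreover have "open (ereal -` {..<L})"
    by (rule open_vimage) (auto intro: continuous_intros)
  ultimately show ?thesis
    by auto
qed

lemma open_param_int_subset_param_int: "open_param_int L \<subseteq> param_int L"
  by (auto simp: open_param_int_def param_int_def)

lemma is_interval_open_param_int: "is_interval (open_param_int L)"
  unfolding is_interval_1 open_param_int_def by (auto intro: le_less_trans[of "ereal _" "ereal _"])

lemma smooth_on_set_subset: "smooth_on_set S f \<Longrightarrow> U \<subseteq> S \<Longrightarrow> smooth_on_set U f"
  unfolding smooth_on_set_def by (metis has_vector_derivative_within_subset subsetD)

lemma smooth_on_open_set_derivs:
  assumes "smooth_on_set U f" "open U"
  obtains F where "F 0 = f" "\<And>k s. s \<in> U \<Longrightarrow> (F k has_vector_derivative F (Suc k) s) (at s)"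
  using assms unfolding smooth_on_set_def by (metis at_within_open)

lemma smooth_on_open_set_deriv:
  fixes f :: "real \<Rightarrow> real"
  assumes "smooth_on_set U f" "open U"
  shows "\<And>s. s \<in> U \<Longrightarrow> (f has_real_derivative deriv f s) (at s)"
    and "continuous_on U (deriv f)"
proof -
  obtain F where F0: "F 0 = f" and F: "\<And>k s. s \<in> U \<Longrightarrow> (F k has_vector_derivative F (Suc k) s) (at s)"
    using smooth_on_open_set_derivs[OF assms] by blast
  have f': "(f has_real_derivative F 1 s) (at s)" if "s \<in> U" for s
    using F[OF that, of 0] by (simp add: F0 has_real_derivative_iff_has_vector_derivative)
  then show "\<And>s. s \<in> U \<Longrightarrow> (f has_real_derivative deriv f s) (at s)"
    by (metis DERIV_imp_deriv)
  have "continuous_on U (F 1)"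
    using F[of _ 1] by (meson continuous_at_imp_continuous_on has_vector_derivative_continuous)
  moreover have "continuous_on U (F 1) = continuous_on U (deriv f)"
    by (rule continuous_on_cong) (auto simp: DERIV_imp_deriv[OF f'])
  ultimately show "continuous_on U (deriv f)"
    by simp
qed

lemma nonzero_if_deriv_square_nonzero:
  fixes f :: "real \<Rightarrow> real"
  assumes "f differentiable (at s)" "deriv (\<lambda>t. (f t)\<^sup>2) s \<noteq> 0"
  shows "f s \<noteq> 0"
proof
  assume "f s = 0"
  obtain f' where "(f has_real_derivative f') (at s)"
    using assms(1) real_differentiable_def by blast
  then have "((\<lambda>t. (f t)\<^sup>2) has_real_derivative 0) (at s)"
    using \<open>f s = 0\<close> by (auto intro!: derivative_eq_intros)
  then show False
    using assms(2) DERIV_imp_deriv by blast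
qed

lemma sign_constant_if_continuous_nonzero:
  fixes f :: "real \<Rightarrow> real"
  assumes "is_interval U" "continuous_on U f" "\<And>s. s \<in> U \<Longrightarrow> f s \<noteq> 0"
  shows "(\<forall>s\<in>U. f s > 0) \<or> (\<forall>s\<in>U. f s < 0)"
proof (rule ccontr)
  assume "\<not> ?thesis"
  then obtain a b where "a \<in> U" "f a < 0" "b \<in> U" "f b > 0"
    using assms(3) by (meson linorder_neqE_linordered_idom)
  moreover have "connected (f ` U)"
    using assms(1,2) by (simp add: connected_continuous_image is_interval_connected)
  ultimately have "0 \<in> f ` U"
    unfolding connected_iff_interval by (meson imageI less_imp_le)
  then show False
    using assms(3) by auto
qed

lemma strict_mono_or_antimono_if_deriv_nonzero:
  fixes f f' :: "real \<Rightarrow> real"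
  assumes U: "is_interval U"
    and f': "\<And>s. s \<in> U \<Longrightarrow> (f has_real_derivative f' s) (at s)"
    and "continuous_on U f'" "\<And>s. s \<in> U \<Longrightarrow> f' s \<noteq> 0"
  shows "(\<forall>s\<in>U. \<forall>t\<in>U. s < t \<longrightarrow> f s < f t) \<or> (\<forall>s\<in>U. \<forall>t\<in>U. s < t \<longrightarrow> f s > f t)"
proof -
  have between: "x \<in> U" if "s \<in> U" "t \<in> U" "s \<le> x" "x \<le> t" for s t x
    using U that unfolding is_interval_1 by blast
  from sign_constant_if_continuous_nonzero[OF U assms(3,4)] show ?thesis
  proof
    assume pos: "\<forall>s\<in>U. f' s > 0"
    have "f s < f t" if "s \<in> U" "t \<in> U" "s < t" for s t
      using \<open>s < t\<close> by (rule DERIV_pos_imp_increasing) (use f' pos between that in blast)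
    then show ?thesis by blast
  next
    assume neg: "\<forall>s\<in>U. f' s < 0"
    have "f s > f t" if "s \<in> U" "t \<in> U" "s < t" for s t
      using \<open>s < t\<close> by (rule DERIV_neg_imp_decreasing) (use f' neg between that in blast)
    then show ?thesis by blast
  qed
qed

lemma curvature_differentiable:
  fixes \<gamma> T :: "real \<Rightarrow> complex" and \<kappa> :: "real \<Rightarrow> real"
  assumes "smooth_on_set U \<gamma>" "open U" "s \<in> U"
    and \<gamma>': "\<And>t. t \<in> U \<Longrightarrow> (\<gamma> has_vector_derivative T t) (at t)"
    and T': "\<And>t. t \<in> U \<Longrightarrow> (T has_vector_derivative of_real (\<kappa> t) * (\<i> * T t)) (at t)"
    and unit: "\<And>t. t \<in> U \<Longrightarrow> norm (T t) = 1"
  shows "\<kappa> differentiable (at s)"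
proof -
  obtain F where F0: "F 0 = \<gamma>" and F: "\<And>k t. t \<in> U \<Longrightarrow> (F k has_vector_derivative F (Suc k) t) (at t)"
    using smooth_on_open_set_derivs[OF assms(1,2)] by blast
  have F1: "F 1 t = T t" if "t \<in> U" for t
    using vector_derivative_unique_at[OF F[OF that, of 0, unfolded F0] \<gamma>'[OF that]] by simp
  have F2: "F 2 t = of_real (\<kappa> t) * (\<i> * T t)" if "t \<in> U" for t
  proof -
    have "(F 1 has_vector_derivative of_real (\<kappa> t) * (\<i> * T t)) (at t)"
      using T'[OF that] assms(2) that by (rule has_vector_derivative_transform_within_open) (metis F1)
    then show ?thesis
      using vector_derivative_unique_at F[OF that, of 1] by (metis numeral_2_eq_2 One_nat_def)
  qed
  have \<kappa>_eq: "\<kappa> t = Im (F 2 t * cnj (F 1 t))" if "t \<in> U" for t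
  proof -
    have "T t * cnj (T t) = 1"
      using complex_norm_square[of "T t"] unit[OF that] by simp
    then show ?thesis
      unfolding F1[OF that] F2[OF that] by (simp add: mult.assoc)
  qed
  have "((\<lambda>t. Im (F 2 t * cnj (F 1 t))) has_real_derivative
          Im (F 2 s * cnj (F (Suc 1) s) + F (Suc 2) s * cnj (F 1 s))) (at s)"
    by (intro has_field_derivative_Im has_vector_derivative_mult has_vector_derivative_cnj F assms(3))
  then have "(\<kappa> has_real_derivative Im (F 2 s * cnj (F (Suc 1) s) + F (Suc 2) s * cnj (F 1 s))) (at s)"
    unfolding has_real_derivative_iff_has_vector_derivative
    using assms(2,3) by (rule has_vector_derivative_transform_within_open) (simp add: \<kappa>_eq)
  then show ?thesis
    using real_differentiable_def by blast
qed

text \<open>On U the product T cnj(\<gamma>) cis(-\<omega>) is the real number |\<gamma>|, so the imaginary part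
  of its derivative vanishes.\<close>
lemma polar_tangential_angle_deriv:
  fixes \<gamma> T :: "real \<Rightarrow> complex" and \<omega> :: "real \<Rightarrow> real"
  assumes "open U" "s \<in> U"
    and \<gamma>': "(\<gamma> has_vector_derivative T s) (at s)"
    and T': "(T has_vector_derivative of_real k * (\<i> * T s)) (at s)"
    and \<omega>': "(\<omega> has_real_derivative w') (at s)"
    and unit: "norm (T s) = 1"
    and polar: "\<And>t. t \<in> U \<Longrightarrow> cis (\<omega> t) * (\<gamma> t / of_real (norm (\<gamma> t))) = T t"
  shows "w' * norm (\<gamma> s) = k * norm (\<gamma> s) - sin (\<omega> s)"
proof -
  have T_cnj_\<gamma>: "T t * cnj (\<gamma> t) = cis (\<omega> t) * of_real (norm (\<gamma> t))" if "t \<in> U" for t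
  proof -
    have "T t * cnj (\<gamma> t) = cis (\<omega> t) * (\<gamma> t * cnj (\<gamma> t)) / of_real (norm (\<gamma> t))"
      by (simp flip: polar[OF that])
    then show ?thesis
      by (simp add: complex_norm_square[symmetric] power2_eq_square)
  qed
  define P where "P t = T t * cnj (\<gamma> t) * cis (- \<omega> t)" for t
  define P' where "P' = T s * cnj (\<gamma> s) * (of_real (- w') * (\<i> * cis (- \<omega> s)))
    + (T s * cnj (T s) + of_real k * (\<i> * T s) * cnj (\<gamma> s)) * cis (- \<omega> s)"
  have "(P has_vector_derivative P') (at s)"
    unfolding P_def P'_def
    by (intro has_vector_derivative_mult has_vector_derivative_cnj has_vector_derivative_cis
        DERIV_minus \<omega>' T' \<gamma>')
  then have "((\<lambda>t. Im (P t)) has_real_derivative Im P') (at s)"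
    by (rule has_field_derivative_Im)
  moreover have "((\<lambda>t. Im (P t)) has_real_derivative 0) (at s)"
    unfolding has_real_derivative_iff_has_vector_derivative
    using has_vector_derivative_const assms(1,2)
  proof (rule has_vector_derivative_transform_within_open)
    fix t assume "t \<in> U"
    have "P t = (cis (\<omega> t) * cis (- \<omega> t)) * of_real (norm (\<gamma> t))"
      by (simp add: P_def T_cnj_\<gamma>[OF \<open>t \<in> U\<close>] ac_simps)
    then show "Im 0 = Im (P t)"
      by (simp add: cis_mult)
  qed
  ultimately have "Im P' = 0"
    by (rule DERIV_unique)
  moreover have "P' = \<i> * of_real ((k - w') * norm (\<gamma> s)) + cis (- \<omega> s)"
  proof -
    have "T s * cnj (T s) = 1"
      using complex_norm_square[of "T s"] unit by simp
    then have "P' = \<i> * of_real ((k - w') * norm (\<gamma> s)) * (cis (\<omega> s) * cis (- \<omega> s)) + cis (- \<omega> s)"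
      unfolding P'_def using T_cnj_\<gamma>[OF assms(2)] by (simp add: algebra_simps)
    then show ?thesis
      by (simp add: cis_mult)
  qed
  ultimately show ?thesis
    by (simp add: algebra_simps)
qed

lemma sin_bound_outside_osculating_disk:
  fixes g :: complex and k w :: real
  assumes "g \<noteq> 0" "k \<noteq> 0"
    and outside: "0 \<notin> ball (g + of_real (1 / k) * (\<i> * (cis w * (g / of_real (norm g))))) (1 / \<bar>k\<bar>)"
  shows "2 * k * sin w \<le> norm g * k\<^sup>2"
proof -
  define r where "r = norm g"
  have "r > 0"
    using assms(1) by (simp add: r_def)
  define z where "z = 1 + \<i> * cis w / of_real (k * r)"
  have "g + of_real (1 / k) * (\<i> * (cis w * (g / of_real r))) = g * z"
    using \<open>r > 0\<close> assms(2) by (simp add: z_def field_simps)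
  then have "1 / \<bar>k\<bar> \<le> norm (g * z)"
    using outside[folded r_def] by (simp add: dist_norm not_less)
  then have "(1 / \<bar>k\<bar>)\<^sup>2 \<le> r\<^sup>2 * (norm z)\<^sup>2"
    by (metis power_mono norm_mult power_mult_distrib r_def zero_le_divide_1_iff abs_ge_zero)
  also have "(norm z)\<^sup>2 = (1 - sin w / (k * r))\<^sup>2 + (cos w / (k * r))\<^sup>2"
    unfolding z_def cmod_power2 by (simp add: Re_divide Im_divide power2_eq_square field_simps)
  also have "\<dots> = 1 - 2 * sin w / (k * r) + 1 / (k * r)\<^sup>2"
    using \<open>r > 0\<close> assms(2) sin_cos_squared_add[of w]
    by (simp add: power2_eq_square field_simps)
  also have "r\<^sup>2 * (1 - 2 * sin w / (k * r) + 1 / (k * r)\<^sup>2) = r\<^sup>2 - 2 * r * sin w / k + (1 / \<bar>k\<bar>)\<^sup>2"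
    using \<open>r > 0\<close> assms(2) by (simp add: power_divide field_simps power2_eq_square)
  finally have "0 \<le> (r\<^sup>2 - 2 * r * sin w / k) * (k\<^sup>2 / r)"
    using \<open>r > 0\<close> by simp
  also have "\<dots> = r * k\<^sup>2 - 2 * k * sin w"
    using \<open>r > 0\<close> assms(2) by (simp add: field_simps power2_eq_square)
  finally show ?thesis
    by (simp add: r_def)
qed

lemma curvature_mult_angle_deriv_pos:
  fixes g :: complex and k w w' :: real
  assumes "g \<noteq> 0" "k \<noteq> 0"
    and outside: "0 \<notin> ball (g + of_real (1 / k) * (\<i> * (cis w * (g / of_real (norm g))))) (1 / \<bar>k\<bar>)"
    and angle_deriv: "w' * norm g = k * norm g - sin w"
  shows "k * w' > 0"
proof -
  have "2 * k * sin w \<le> norm g * k\<^sup>2"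
    using assms(1,2) outside by (rule sin_bound_outside_osculating_disk)
  moreover have "norm g * k\<^sup>2 > 0"
    using assms(1,2) by simp
  moreover have "k * w' * norm g = norm g * k\<^sup>2 - k * sin w"
    using arg_cong[OF angle_deriv, of "(*) k"] by (simp add: algebra_simps power2_eq_square)
  ultimately have "k * w' * norm g > 0"
    by linarith
  then show ?thesis
    using assms(1) by (simp add: zero_less_mult_iff)
qed

lemma curvature_mult_polar_tangential_angle_deriv_pos:
  fixes \<gamma> T :: "real \<Rightarrow> complex" and \<kappa> \<omega> :: "real \<Rightarrow> real"
  assumes U: "open U" "s \<in> U"
    and smooth: "smooth_on_set U \<gamma>" "smooth_on_set U \<omega>"
    and \<gamma>': "\<And>t. t \<in> U \<Longrightarrow> (\<gamma> has_vector_derivative T t) (at t)"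
    and T': "\<And>t. t \<in> U \<Longrightarrow> (T has_vector_derivative of_real (\<kappa> t) * (\<i> * T t)) (at t)"
    and unit: "\<And>t. t \<in> U \<Longrightarrow> norm (T t) = 1"
    and polar: "\<And>t. t \<in> U \<Longrightarrow> cis (\<omega> t) * (\<gamma> t / of_real (norm (\<gamma> t))) = T t"
    and "\<gamma> s \<noteq> 0"
    and "deriv (\<lambda>t. (\<kappa> t)\<^sup>2) s \<noteq> 0"
    and outside: "0 \<notin> osc_disk \<gamma> T \<kappa> s"
  shows "\<kappa> s * deriv \<omega> s > 0"
proof (rule curvature_mult_angle_deriv_pos)
  show "\<gamma> s \<noteq> 0"
    by fact
  show "\<kappa> s \<noteq> 0"
    using curvature_differentiable[OF smooth(1) U \<gamma>' T' unit] \<open>deriv (\<lambda>t. (\<kappa> t)\<^sup>2) s \<noteq> 0\<close>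
    by (rule nonzero_if_deriv_square_nonzero)
  show "0 \<notin> ball (\<gamma> s + of_real (1 / \<kappa> s) * (\<i> * (cis (\<omega> s) * (\<gamma> s / of_real (norm (\<gamma> s)))))) (1 / \<bar>\<kappa> s\<bar>)"
    using outside unfolding osc_disk_def polar[OF U(2)] .
  show "deriv \<omega> s * norm (\<gamma> s) = \<kappa> s * norm (\<gamma> s) - sin (\<omega> s)"
    using U \<gamma>'[OF U(2)] T'[OF U(2)] smooth_on_open_set_deriv(1)[OF smooth(2) U(1,2)] unit[OF U(2)] polar
    by (rule polar_tangential_angle_deriv)
qed

theorem corollary2p6:
  fixes L :: ereal
    and \<gamma> T :: "real \<Rightarrow> complex"
    and \<kappa> \<omega> :: "real \<Rightarrow> real"
  assumes L_pos: "L > 0"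
    and smooth: "smooth_on_set (param_int L) \<gamma>"
    and T_deriv: "\<And>s. s \<in> param_int L \<Longrightarrow> (\<gamma> has_vector_derivative T s) (at s within param_int L)"
    and arclength: "\<And>s. s \<in> param_int L \<Longrightarrow> norm (T s) = 1"
    and curvature: "\<And>s. s \<in> param_int L \<Longrightarrow>
           (T has_vector_derivative (of_real (\<kappa> s) * (\<i> * T s))) (at s within param_int L)"
    and nonzero: "\<And>s. s \<in> open_param_int L \<Longrightarrow> \<gamma> s \<noteq> 0"
    and omega_smooth: "smooth_on_set (open_param_int L) \<omega>"
    and omega_polar: "\<And>s. s \<in> open_param_int L \<Longrightarrow> cis (\<omega> s) * (\<gamma> s / of_real (norm (\<gamma> s))) = T s"
    and kappa2_incr: "\<And>s. s \<in> open_param_int L \<Longrightarrow> deriv (\<lambda>t. (\<kappa> t)\<^sup>2) s > 0"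
    and origin: "0 \<notin> init_osc_disk L \<gamma> T \<kappa>"
  shows "(\<forall>s\<in>open_param_int L. \<kappa> s * deriv \<omega> s > 0) \<and>
         ((\<forall>s\<in>open_param_int L. \<forall>t\<in>open_param_int L. s < t \<longrightarrow> \<omega> s < \<omega> t) \<or>
          (\<forall>s\<in>open_param_int L. \<forall>t\<in>open_param_int L. s < t \<longrightarrow> \<omega> s > \<omega> t))"
proof -
  define U where "U = open_param_int L"
  have U: "open U" "is_interval U" "U \<subseteq> param_int L"
    by (simp_all add: U_def open_open_param_int is_interval_open_param_int open_param_int_subset_param_int)
  have at_U: "at s within param_int L = at s" if "s \<in> U" for s
    using that U(1,3) by (rule at_within_open_subset)
  have pos: "\<kappa> s * deriv \<omega> s > 0" if "s \<in> U" for s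
  proof (rule curvature_mult_polar_tangential_angle_deriv_pos[OF U(1) that])
    show "smooth_on_set U \<gamma>" "smooth_on_set U \<omega>"
      using smooth_on_set_subset[OF smooth U(3)] omega_smooth by (simp_all add: U_def)
    show "(\<gamma> has_vector_derivative T t) (at t)"
      and "(T has_vector_derivative of_real (\<kappa> t) * (\<i> * T t)) (at t)"
      and "norm (T t) = 1" if "t \<in> U" for t
      using T_deriv[of t] curvature[of t] arclength[of t] at_U[OF that] that U(3) by auto
  qed (use that omega_polar nonzero kappa2_incr[of s] origin in \<open>auto simp: U_def init_osc_disk_def\<close>)
  moreover have "continuous_on U (deriv \<omega>)"
    and "\<And>s. s \<in> U \<Longrightarrow> (\<omega> has_real_derivative deriv \<omega> s) (at s)"
    using smooth_on_open_set_deriv omega_smooth U(1) unfolding U_def by blast+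
  ultimately show ?thesis
    using strict_mono_or_antimono_if_deriv_nonzero[OF U(2)] unfolding U_def by fastforce
qed

end
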